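(* Let $(\chi_n)_{n\in\mathbb N}$ be independent Bernoulli random variables with $\mathbb P(\chi_n=1)=p\in(0,1)$. Let $N\ge1$ and let $c$ be a finitely supported real function on the set of multi-indices $\alpha=(\alpha_1,\dots,\alpha_N)\in\mathbb N^N$ with $1\le\alpha_1<\dots<\alpha_N$. Set $\Psi_N(c^2)=\sum_{|\alpha|=N}c(\alpha)^2\chi^\alpha$ with $\chi^\alpha=\prod_{i=1}^N\chi_{\alpha_i}$, $|c|_N^2=\sum_{|\alpha|=N}c(\alpha)^2$ and $\delta_N^2(c)=\max_n\sum_{|\alpha|=N,\,n\in\{\alpha_1,\dots,\alpha_N\}}c(\alpha)^2$, and assume $\delta_N(c)>0$. If $x<(p/2)^N|c|_N^2$, then $$\mathbb P(\Psi_N(c^2)\le x)\le\frac{2e^3}{9}N\exp\Big(-\frac{x^2}{\delta_N^2(c)|c|_N^2}\Big).$$ *)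

theory Defs
  imports "HOL-Probability.Probability"
begin

text \<open>Multi-indices 1 \<le> a_1 < ... < a_N are identified with their (finite) sets of
entries: subsets of {1,2,...} of cardinality N.\<close>
definition multi_idx :: "nat \<Rightarrow> nat set set" where
  "multi_idx N = {\<alpha>. finite \<alpha> \<and> card \<alpha> = N \<and> 0 \<notin> \<alpha>}"

definition supp_c :: "nat \<Rightarrow> (nat set \<Rightarrow> real) \<Rightarrow> nat set set" where
  "supp_c N c = {\<alpha> \<in> multi_idx N. c \<alpha> \<noteq> 0}"

definition chi_pow :: "(nat \<Rightarrow> 'a \<Rightarrow> real) \<Rightarrow> nat set \<Rightarrow> 'a \<Rightarrow> real" where
  "chi_pow X \<alpha> \<omega> = (\<Prod>i\<in>\<alpha>. X i \<omega>)"

definition Psi :: "nat \<Rightarrow> (nat set \<Rightarrow> real) \<Rightarrow> (nat \<Rightarrow> 'a \<Rightarrow> real) \<Rightarrow> 'a \<Rightarrow> real" where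
  "Psi N c X \<omega> = (\<Sum>\<alpha>\<in>supp_c N c. (c \<alpha>)\<^sup>2 * chi_pow X \<alpha> \<omega>)"

definition cnorm2 :: "nat \<Rightarrow> (nat set \<Rightarrow> real) \<Rightarrow> real" where
  "cnorm2 N c = (\<Sum>\<alpha>\<in>supp_c N c. (c \<alpha>)\<^sup>2)"

definition delta2 :: "nat \<Rightarrow> (nat set \<Rightarrow> real) \<Rightarrow> real" where
  "delta2 N c = Max (range (\<lambda>n. \<Sum>\<alpha>\<in>{\<alpha>\<in>supp_c N c. n \<in> \<alpha>}. (c \<alpha>)\<^sup>2))"

end

theory Submission
  imports Defs
begin

text \<open>Only the \<open>\<chi>\<^sub>i\<close> with \<open>i\<close> in a window \<open>{1..m}\<close> containing the support of \<open>c\<close>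
  matter: \<open>\<Psi>\<^sub>N(c\<^sup>2) = F S\<close> for the random set \<open>S = {i \<le> m. \<chi>\<^sub>i = 1}\<close>, where
  \<open>F T = \<Sum>\<^bsub>\<alpha> \<subseteq> T\<^esub> c(\<alpha>)\<^sup>2\<close>. \<open>F\<close> has mean \<open>p\<^sup>N |c|\<^sup>2\<close>, and adding \<open>i\<close> to \<open>T\<close> raises \<open>F\<close>
  by at most \<open>d\<^sub>i = \<Sum>\<^bsub>\<alpha> \<ni> i\<^esub> c(\<alpha>)\<^sup>2 \<le> \<delta>\<^sub>N\<^sup>2(c)\<close>. McDiarmid's bounded-differences
  inequality on the \<open>p\<close>-biased cube gives \<open>P(F \<le> E F - t) \<le> exp(-2t\<^sup>2 / \<Sum> d\<^sub>i\<^sup>2)\<close>, and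
  \<open>\<Sum> d\<^sub>i\<^sup>2 \<le> \<delta>\<^sub>N\<^sup>2(c) \<Sum> d\<^sub>i = \<delta>\<^sub>N\<^sup>2(c) N |c|\<^sup>2\<close>. The hypothesis on \<open>x\<close> gives
  \<open>t = p\<^sup>N |c|\<^sup>2 - x \<ge> (2\<^sup>N - 1) x \<ge> N x\<close>, which yields the bound even without the factor
  \<open>2e\<^sup>3N/9 \<ge> 1\<close>.\<close>

lemma Hoeffding_two_point:
  fixes p a b l :: real
  assumes "0 \<le> p" "p \<le> 1"
  shows "p * exp (l * a) + (1 - p) * exp (l * b)
           \<le> exp (l * (p * a + (1 - p) * b) + l\<^sup>2 * (a - b)\<^sup>2 / 8)"
proof -
  have centered_nonneg: "q * exp ((1 - q) * h) + (1 - q) * exp (- q * h) \<le> exp (h\<^sup>2 / 8)"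
    if q: "0 \<le> q" "q \<le> 1" and h: "h \<ge> 0" for q h :: real
  proof -
    have pos: "1 + q * (exp h - 1) > 0"
      using q h by (intro add_pos_nonneg mult_nonneg_nonneg) auto
    have "ln (1 + q * (exp h - 1)) \<le> h\<^sup>2 / 8 + h * q"
      using Hoeffdings_lemma_aux[of h q] q h by simp
    then have "1 + q * (exp h - 1) \<le> exp (h\<^sup>2 / 8 + h * q)"
      using pos by (metis exp_le_cancel_iff exp_ln)
    then have "exp (- q * h) * (1 + q * (exp h - 1)) \<le> exp (- q * h) * exp (h\<^sup>2 / 8 + h * q)"
      by (intro mult_left_mono) auto
    then show ?thesis
      by (simp add: algebra_simps flip: exp_add)
  qed
  \<comment> \<open>\<open>h < 0\<close> reduces to \<open>h > 0\<close> by exchanging \<open>p\<close> and \<open>1 - p\<close>\<close>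
  have centered: "p * exp ((1 - p) * h) + (1 - p) * exp (- p * h) \<le> exp (h\<^sup>2 / 8)" for h
    using centered_nonneg[of p h] centered_nonneg[of "1 - p" "- h"] assms
    by (cases "h \<ge> 0") (auto simp: algebra_simps)
  have "exp (l * a) = exp (l * (p * a + (1 - p) * b)) * exp ((1 - p) * (l * (a - b)))"
    and "exp (l * b) = exp (l * (p * a + (1 - p) * b)) * exp (- p * (l * (a - b)))"
    by (simp_all add: algebra_simps flip: exp_add)
  then have "p * exp (l * a) + (1 - p) * exp (l * b)
      = exp (l * (p * a + (1 - p) * b))
        * (p * exp ((1 - p) * (l * (a - b))) + (1 - p) * exp (- p * (l * (a - b))))"
    by (simp add: algebra_simps)
  also have "\<dots> \<le> exp (l * (p * a + (1 - p) * b)) * exp ((l * (a - b))\<^sup>2 / 8)"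
    using centered by (intro mult_left_mono) auto
  finally show ?thesis
    by (simp add: power_mult_distrib flip: exp_add)
qed

definition cube_weight :: "real \<Rightarrow> nat \<Rightarrow> nat set \<Rightarrow> real" where
  "cube_weight p m T = (\<Prod>i\<in>{1..m}. if i \<in> T then p else 1 - p)"

definition cube_expectation :: "real \<Rightarrow> nat \<Rightarrow> (nat set \<Rightarrow> real) \<Rightarrow> real" where
  "cube_expectation p m H = (\<Sum>T\<in>Pow {1..m}. cube_weight p m T * H T)"

lemma cube_expectation_0 [simp]: "cube_expectation p 0 H = H {}"
  by (simp add: cube_expectation_def cube_weight_def)

lemma cube_expectation_Suc:
  "cube_expectation p (Suc m) H
     = cube_expectation p m (\<lambda>T. p * H (insert (Suc m) T) + (1 - p) * H T)"
proof -
  have window: "{1..Suc m} = insert (Suc m) {1..m}" by auto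
  have weight_out: "cube_weight p (Suc m) T = (1 - p) * cube_weight p m T"
    if "T \<subseteq> {1..m}" for T
    using that by (auto simp: cube_weight_def window intro!: prod.cong)
  have weight_in: "cube_weight p (Suc m) (insert (Suc m) T) = p * cube_weight p m T"
    if "T \<subseteq> {1..m}" for T
    using that by (auto simp: cube_weight_def window intro!: prod.cong)
  have inj: "inj_on (insert (Suc m)) (Pow {1..m})"
  proof (rule inj_onI)
    fix S T assume "S \<in> Pow {1..m}" "T \<in> Pow {1..m}" "insert (Suc m) S = insert (Suc m) T"
    then show "S = T" by (metis Diff_insert_absorb PowD atLeastAtMost_iff not_less_eq_eq order_refl subsetD)
  qed
  have "cube_expectation p (Suc m) H
      = (\<Sum>T\<in>Pow {1..m}. cube_weight p (Suc m) T * H T)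
        + (\<Sum>T\<in>insert (Suc m) ` Pow {1..m}. cube_weight p (Suc m) T * H T)"
    unfolding cube_expectation_def window Pow_insert by (rule sum.union_disjoint) auto
  also have "(\<Sum>T\<in>insert (Suc m) ` Pow {1..m}. cube_weight p (Suc m) T * H T)
      = (\<Sum>T\<in>Pow {1..m}. cube_weight p m T * (p * H (insert (Suc m) T)))"
    by (subst sum.reindex[OF inj]) (auto simp: weight_in intro!: sum.cong)
  also have "(\<Sum>T\<in>Pow {1..m}. cube_weight p (Suc m) T * H T)
      = (\<Sum>T\<in>Pow {1..m}. cube_weight p m T * ((1 - p) * H T))"
    by (intro sum.cong) (auto simp: weight_out)
  finally show ?thesis
    by (simp add: cube_expectation_def algebra_simps flip: sum.distrib)
qed

lemma cube_expectation_cong: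
  "(\<And>T. T \<subseteq> {1..m} \<Longrightarrow> H T = G T) \<Longrightarrow> cube_expectation p m H = cube_expectation p m G"
  unfolding cube_expectation_def by (intro sum.cong) auto

lemma cube_expectation_mono:
  assumes "0 \<le> p" "p \<le> 1" and "\<And>T. T \<subseteq> {1..m} \<Longrightarrow> H T \<le> G T"
  shows "cube_expectation p m H \<le> cube_expectation p m G"
proof -
  have "0 \<le> cube_weight p m T" for T
    unfolding cube_weight_def using assms(1,2) by (intro prod_nonneg) auto
  then show ?thesis
    unfolding cube_expectation_def using assms(3) by (intro sum_mono mult_left_mono) auto
qed

lemma cube_expectation_cmult:
  "cube_expectation p m (\<lambda>T. a * H T) = a * cube_expectation p m H"
  unfolding cube_expectation_def by (simp add: sum_distrib_left algebra_simps)

lemma cube_expectation_sum: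
  "cube_expectation p m (\<lambda>T. \<Sum>a\<in>A. f a T) = (\<Sum>a\<in>A. cube_expectation p m (f a))"
  unfolding cube_expectation_def by (simp add: sum_distrib_left sum.swap[of _ A])

lemma cube_expectation_superset:
  assumes "\<alpha> \<subseteq> {1..m}"
  shows "cube_expectation p m (\<lambda>T. of_bool (\<alpha> \<subseteq> T)) = p ^ card \<alpha>"
  using assms
proof (induction m arbitrary: \<alpha>)
  case 0
  then show ?case by auto
next
  case (Suc m)
  show ?case
  proof (cases "Suc m \<in> \<alpha>")
    case True
    have window: "\<alpha> - {Suc m} \<subseteq> {1..m}" using Suc.prems by auto
    have "card \<alpha> = Suc (card (\<alpha> - {Suc m}))"
      using True finite_subset[OF Suc.prems] by (metis card_Suc_Diff1 finite_atLeastAtMost)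
    moreover have "cube_expectation p (Suc m) (\<lambda>T. of_bool (\<alpha> \<subseteq> T))
        = cube_expectation p m (\<lambda>T. p * of_bool (\<alpha> - {Suc m} \<subseteq> T))"
      unfolding cube_expectation_Suc using True by (intro cube_expectation_cong) auto
    ultimately show ?thesis by (simp add: cube_expectation_cmult Suc.IH[OF window])
  next
    case False
    then have window: "\<alpha> \<subseteq> {1..m}" using Suc.prems by (auto simp: le_Suc_eq)
    have "cube_expectation p (Suc m) (\<lambda>T. of_bool (\<alpha> \<subseteq> T))
        = cube_expectation p m (\<lambda>T. of_bool (\<alpha> \<subseteq> T))"
      unfolding cube_expectation_Suc using False
      by (intro cube_expectation_cong) (auto simp: subset_insert algebra_simps)
    then show ?thesis using Suc.IH[OF window] by simp
  qed
qed

text \<open>Conditioning on whether \<open>m + 1 \<in> S\<close>: the conditional mean \<open>g\<close> again has differences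
  bounded by \<open>d\<close>, and the last coordinate contributes Hoeffding's two-point factor.\<close>

lemma McDiarmid_cube_mgf:
  assumes p: "0 \<le> p" "p \<le> 1"
    and bounded: "\<And>i T. i \<notin> T \<Longrightarrow> \<bar>H (insert i T) - H T\<bar> \<le> d i"
  shows "cube_expectation p m (\<lambda>T. exp (l * (H T - cube_expectation p m H)))
           \<le> exp (l\<^sup>2 * (\<Sum>i\<in>{1..m}. (d i)\<^sup>2) / 8)"
  using bounded
proof (induction m arbitrary: H)
  case 0
  then show ?case by simp
next
  case (Suc m)
  define a where "a T = H (insert (Suc m) T)" for T
  define g where "g T = p * a T + (1 - p) * H T" for T
  define e where "e = cube_expectation p m g"
  have mean: "cube_expectation p (Suc m) H = e"
    unfolding e_def g_def a_def by (rule cube_expectation_Suc)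
  have "\<bar>g (insert i T) - g T\<bar> \<le> d i" if "i \<notin> T" for i T
  proof -
    have "g (insert i T) - g T
        = p * (a (insert i T) - a T) + (1 - p) * (H (insert i T) - H T)"
      by (simp add: g_def algebra_simps)
    then have triangle: "\<bar>g (insert i T) - g T\<bar>
        \<le> p * \<bar>a (insert i T) - a T\<bar> + (1 - p) * \<bar>H (insert i T) - H T\<bar>"
      using p abs_triangle_ineq[of "p * (a (insert i T) - a T)" "(1 - p) * (H (insert i T) - H T)"]
      by (simp add: abs_mult)
    have "\<bar>a (insert i T) - a T\<bar> \<le> d i"
    proof (cases "i = Suc m")
      case True
      then show ?thesis using Suc.prems[of i "{}"] by (simp add: a_def)
    next
      case False
      then show ?thesis
        using Suc.prems[of i "insert (Suc m) T"] that by (simp add: a_def insert_commute)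
    qed
    moreover have "\<bar>H (insert i T) - H T\<bar> \<le> d i" using Suc.prems that .
    ultimately have "\<bar>g (insert i T) - g T\<bar> \<le> p * d i + (1 - p) * d i"
      using p by (intro order_trans[OF triangle] add_mono mult_left_mono) auto
    then show ?thesis by (simp add: algebra_simps)
  qed
  then have IH: "cube_expectation p m (\<lambda>T. exp (l * (g T - e)))
      \<le> exp (l\<^sup>2 * (\<Sum>i\<in>{1..m}. (d i)\<^sup>2) / 8)"
    unfolding e_def by (rule Suc.IH)
  have step: "p * exp (l * (a T - e)) + (1 - p) * exp (l * (H T - e))
      \<le> exp (l * (g T - e)) * exp (l\<^sup>2 * (d (Suc m))\<^sup>2 / 8)" if "T \<subseteq> {1..m}" for T
  proof -
    have "Suc m \<notin> T" using that by auto
    then have "\<bar>a T - H T\<bar> \<le> d (Suc m)"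
      using Suc.prems by (simp add: a_def)
    then have square: "l\<^sup>2 * (a T - H T)\<^sup>2 \<le> l\<^sup>2 * (d (Suc m))\<^sup>2"
      by (metis abs_ge_zero mult_left_mono power2_abs power_mono zero_le_power2)
    have "p * exp (l * (a T - e)) + (1 - p) * exp (l * (H T - e))
        \<le> exp (l * (p * (a T - e) + (1 - p) * (H T - e)) + l\<^sup>2 * ((a T - e) - (H T - e))\<^sup>2 / 8)"
      by (rule Hoeffding_two_point[OF p])
    also have "\<dots> = exp (l * (g T - e) + l\<^sup>2 * (a T - H T)\<^sup>2 / 8)"
      by (simp add: g_def algebra_simps)
    also have "\<dots> \<le> exp (l * (g T - e) + l\<^sup>2 * (d (Suc m))\<^sup>2 / 8)"
      using square by simp
    finally show ?thesis by (simp add: exp_add)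
  qed
  have "cube_expectation p (Suc m) (\<lambda>T. exp (l * (H T - cube_expectation p (Suc m) H)))
      = cube_expectation p m (\<lambda>T. p * exp (l * (a T - e)) + (1 - p) * exp (l * (H T - e)))"
    unfolding mean a_def by (rule cube_expectation_Suc)
  also have "\<dots> \<le> cube_expectation p m (\<lambda>T. exp (l\<^sup>2 * (d (Suc m))\<^sup>2 / 8) * exp (l * (g T - e)))"
    using step by (intro cube_expectation_mono p) (simp add: mult.commute)
  also have "\<dots> \<le> exp (l\<^sup>2 * (d (Suc m))\<^sup>2 / 8) * exp (l\<^sup>2 * (\<Sum>i\<in>{1..m}. (d i)\<^sup>2) / 8)"
    unfolding cube_expectation_cmult using IH by (intro mult_left_mono) auto
  also have "\<dots> = exp (l\<^sup>2 * (\<Sum>i\<in>{1..Suc m}. (d i)\<^sup>2) / 8)"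
    by (simp add: atLeastAtMostSuc_conv algebra_simps add_divide_distrib flip: exp_add)
  finally show ?case .
qed

lemma McDiarmid_cube_lower_tail:
  assumes p: "0 \<le> p" "p \<le> 1"
    and bounded: "\<And>i T. i \<notin> T \<Longrightarrow> \<bar>H (insert i T) - H T\<bar> \<le> d i"
    and D: "(\<Sum>i\<in>{1..m}. (d i)\<^sup>2) \<le> D" "D > 0" and t: "t \<ge> 0"
  shows "cube_expectation p m (\<lambda>T. of_bool (H T \<le> cube_expectation p m H - t))
           \<le> exp (- (2 * t\<^sup>2 / D))"
proof -
  define l where "l = 4 * t / D"
  define e where "e = cube_expectation p m H"
  have l: "l \<ge> 0" using t D by (simp add: l_def)
  have "of_bool (H T \<le> e - t) \<le> exp (- l * t) * exp (- l * (H T - e))" for T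
  proof (cases "H T \<le> e - t")
    case True
    then have "0 \<le> - l * t - l * (H T - e)"
      using l mult_left_mono[of "H T - e" "- t" l] by (simp add: algebra_simps)
    then show ?thesis using True by (simp flip: exp_add)
  qed simp
  then have "cube_expectation p m (\<lambda>T. of_bool (H T \<le> e - t))
      \<le> exp (- l * t) * cube_expectation p m (\<lambda>T. exp (- l * (H T - e)))"
    unfolding cube_expectation_cmult[symmetric] by (intro cube_expectation_mono p)
  also have "\<dots> \<le> exp (- l * t) * exp ((- l)\<^sup>2 * (\<Sum>i\<in>{1..m}. (d i)\<^sup>2) / 8)"
    using McDiarmid_cube_mgf[OF p bounded, of m "- l"] by (simp add: e_def)
  also have "\<dots> \<le> exp (- l * t) * exp ((- l)\<^sup>2 * D / 8)"
    using D(1) by (simp add: mult_left_mono divide_right_mono)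
  also have "\<dots> = exp (- (2 * t\<^sup>2 / D))"
    using D(2) by (simp add: l_def power2_eq_square field_simps flip: exp_add)
  finally show ?thesis unfolding e_def .
qed

context prob_space
begin

lemma prob_window_eq_cube_weight:
  fixes X :: "nat \<Rightarrow> 'a \<Rightarrow> real"
  assumes ind: "indep_vars (\<lambda>_. borel) X {1..}"
    and binary: "\<And>n. n \<ge> 1 \<Longrightarrow> \<forall>\<omega>\<in>space M. X n \<omega> \<in> {0, 1}"
    and success: "\<And>n. n \<ge> 1 \<Longrightarrow> prob {\<omega>\<in>space M. X n \<omega> = 1} = p"
    and T: "T \<subseteq> {1..m}"
  shows "prob {\<omega>\<in>space M. {i\<in>{1..m}. X i \<omega> = 1} = T} = cube_weight p m T"
proof (cases "m = 0")
  case True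
  then show ?thesis using T by (simp add: cube_weight_def prob_space)
next
  case False
  define b :: "nat \<Rightarrow> real" where "b i = of_bool (i \<in> T)" for i
  have "indep_events (\<lambda>i. {\<omega>\<in>space M. X i \<omega> = b i}) {1..}"
    by (rule indep_eventsI_indep_vars[OF ind]) auto
  then have "prob (\<Inter>i\<in>{1..m}. {\<omega>\<in>space M. X i \<omega> = b i})
      = (\<Prod>i\<in>{1..m}. prob {\<omega>\<in>space M. X i \<omega> = b i})"
    using False unfolding indep_events_def by auto
  moreover have "(\<Inter>i\<in>{1..m}. {\<omega>\<in>space M. X i \<omega> = b i})
      = {\<omega>\<in>space M. {i\<in>{1..m}. X i \<omega> = 1} = T}"
  proof -
    have "(\<forall>i\<in>{1..m}. X i \<omega> = b i) \<longleftrightarrow> {i\<in>{1..m}. X i \<omega> = 1} = T"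
      if "\<omega> \<in> space M" for \<omega>
    proof -
      have "\<forall>i\<in>{1..m}. X i \<omega> = 0 \<or> X i \<omega> = 1" using binary that by auto
      then show ?thesis using T by (auto simp: b_def) (metis atLeastAtMost_iff zero_neq_one)
    qed
    moreover have "1 \<in> {1..m}" using False by simp
    ultimately show ?thesis by blast
  qed
  moreover have "prob {\<omega>\<in>space M. X i \<omega> = b i} = (if i \<in> T then p else 1 - p)"
    if i: "i \<in> {1..m}" for i
  proof (cases "i \<in> T")
    case False
    have [measurable]: "X i \<in> borel_measurable M"
      using ind i unfolding indep_vars_def2 by auto
    have "{\<omega>\<in>space M. X i \<omega> = b i} = space M - {\<omega>\<in>space M. X i \<omega> = 1}"
      using False binary i by (auto simp: b_def)
    moreover have "{\<omega>\<in>space M. X i \<omega> = 1} \<in> events" by measurable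
    ultimately show ?thesis
      using False success i by (simp add: prob_compl)
  qed (use success i in \<open>simp add: b_def\<close>)
  ultimately show ?thesis by (simp add: cube_weight_def)
qed

lemma prob_window_eq_cube_expectation:
  fixes X :: "nat \<Rightarrow> 'a \<Rightarrow> real"
  assumes ind: "indep_vars (\<lambda>_. borel) X {1..}"
    and binary: "\<And>n. n \<ge> 1 \<Longrightarrow> \<forall>\<omega>\<in>space M. X n \<omega> \<in> {0, 1}"
    and success: "\<And>n. n \<ge> 1 \<Longrightarrow> prob {\<omega>\<in>space M. X n \<omega> = 1} = p"
  shows "prob {\<omega>\<in>space M. P {i\<in>{1..m}. X i \<omega> = 1}}
           = cube_expectation p m (\<lambda>T. of_bool (P T))"
proof -
  let ?S = "\<lambda>\<omega>. {i\<in>{1..m}. X i \<omega> = 1}"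
  have [measurable]: "X i \<in> borel_measurable M" if "i \<in> {1..m}" for i
    using ind that unfolding indep_vars_def2 by auto
  have events: "{\<omega>\<in>space M. ?S \<omega> = T} \<in> events" if "T \<subseteq> {1..m}" for T
  proof -
    have "?S \<omega> = T \<longleftrightarrow> (\<forall>i\<in>{1..m}. X i \<omega> = 1 \<longleftrightarrow> i \<in> T)" for \<omega>
      using that by blast
    moreover have "{\<omega>\<in>space M. \<forall>i\<in>{1..m}. X i \<omega> = 1 \<longleftrightarrow> i \<in> T} \<in> events"
      by measurable
    ultimately show ?thesis by simp
  qed
  have "prob {\<omega>\<in>space M. P (?S \<omega>)} = prob (\<Union>T\<in>{T\<in>Pow {1..m}. P T}. {\<omega>\<in>space M. ?S \<omega> = T})"
    by (rule arg_cong[where f = prob]) auto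
  also have "\<dots> = (\<Sum>T\<in>{T\<in>Pow {1..m}. P T}. prob {\<omega>\<in>space M. ?S \<omega> = T})"
    using events by (intro finite_measure_finite_Union) (auto simp: disjoint_family_on_def)
  also have "\<dots> = (\<Sum>T\<in>{T\<in>Pow {1..m}. P T}. cube_weight p m T)"
    using prob_window_eq_cube_weight[OF ind binary success] by (intro sum.cong) auto
  also have "\<dots> = cube_expectation p m (\<lambda>T. of_bool (P T))"
    unfolding cube_expectation_def by (rule sum.mono_neutral_cong_left) auto
  finally show ?thesis .
qed

end

lemma supp_c_subset_window:
  assumes "finite (supp_c N c)"
  obtains m where "\<Union>(supp_c N c) \<subseteq> {1..m}"
proof
  have fin: "finite (\<Union>(supp_c N c))"
    using assms by (auto simp: supp_c_def multi_idx_def)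
  show "\<Union>(supp_c N c) \<subseteq> {1..Max (\<Union>(supp_c N c))}"
  proof
    fix i assume i: "i \<in> \<Union>(supp_c N c)"
    then obtain \<alpha> where "\<alpha> \<in> supp_c N c" "i \<in> \<alpha>" by blast
    moreover from this(1) have "0 \<notin> \<alpha>" by (simp add: supp_c_def multi_idx_def)
    ultimately have "i \<noteq> 0" by (intro notI) simp
    moreover have "i \<le> Max (\<Union>(supp_c N c))" using fin i by (rule Max_ge)
    ultimately show "i \<in> {1..Max (\<Union>(supp_c N c))}" by simp
  qed
qed

definition Psi_set :: "nat \<Rightarrow> (nat set \<Rightarrow> real) \<Rightarrow> nat set \<Rightarrow> real" where
  "Psi_set N c T = (\<Sum>\<alpha>\<in>supp_c N c. (c \<alpha>)\<^sup>2 * of_bool (\<alpha> \<subseteq> T))"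

definition delta2_at :: "nat \<Rightarrow> (nat set \<Rightarrow> real) \<Rightarrow> nat \<Rightarrow> real" where
  "delta2_at N c n = (\<Sum>\<alpha>\<in>{\<alpha>\<in>supp_c N c. n \<in> \<alpha>}. (c \<alpha>)\<^sup>2)"

lemma Psi_eq_Psi_set:
  assumes "\<Union>(supp_c N c) \<subseteq> {1..m}" and "\<And>i. i \<in> {1..m} \<Longrightarrow> X i \<omega> \<in> {0, 1}"
  shows "Psi N c X \<omega> = Psi_set N c {i\<in>{1..m}. X i \<omega> = 1}"
  unfolding Psi_def Psi_set_def
proof (intro sum.cong refl)
  fix \<alpha> assume \<alpha>: "\<alpha> \<in> supp_c N c"
  then have "finite \<alpha>" and window: "\<alpha> \<subseteq> {1..m}"
    using assms(1) by (auto simp: supp_c_def multi_idx_def)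
  have "chi_pow X \<alpha> \<omega> = of_bool (\<alpha> \<subseteq> {i\<in>{1..m}. X i \<omega> = 1})"
  proof (cases "\<forall>i\<in>\<alpha>. X i \<omega> = 1")
    case True
    then show ?thesis using window by (auto simp: chi_pow_def)
  next
    case False
    then obtain i where "i \<in> \<alpha>" "X i \<omega> = 0"
      using window assms(2) by blast
    then show ?thesis
      using \<open>finite \<alpha>\<close> by (auto simp: chi_pow_def intro: prod_zero)
  qed
  then show "(c \<alpha>)\<^sup>2 * chi_pow X \<alpha> \<omega> = (c \<alpha>)\<^sup>2 * of_bool (\<alpha> \<subseteq> {i\<in>{1..m}. X i \<omega> = 1})"
    by simp
qed

lemma Psi_set_nonneg: "0 \<le> Psi_set N c T"
  unfolding Psi_set_def by (intro sum_nonneg) auto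

lemma Psi_set_insert_diff_le:
  assumes "finite (supp_c N c)" and "i \<notin> T"
  shows "\<bar>Psi_set N c (insert i T) - Psi_set N c T\<bar> \<le> delta2_at N c i"
proof -
  have "Psi_set N c (insert i T) - Psi_set N c T
      = (\<Sum>\<alpha>\<in>supp_c N c. (c \<alpha>)\<^sup>2 * (of_bool (\<alpha> \<subseteq> insert i T) - of_bool (\<alpha> \<subseteq> T)))"
    unfolding Psi_set_def by (simp add: algebra_simps flip: sum_subtractf)
  moreover have "0 \<le> of_bool (\<alpha> \<subseteq> insert i T) - (of_bool (\<alpha> \<subseteq> T) :: real)" for \<alpha>
    by (auto simp: subset_insertI2)
  moreover have "(c \<alpha>)\<^sup>2 * (of_bool (\<alpha> \<subseteq> insert i T) - of_bool (\<alpha> \<subseteq> T))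
      \<le> (if i \<in> \<alpha> then (c \<alpha>)\<^sup>2 else 0)" for \<alpha>
    using assms(2) by (auto simp: subset_insert)
  ultimately have "0 \<le> Psi_set N c (insert i T) - Psi_set N c T"
    and "Psi_set N c (insert i T) - Psi_set N c T \<le> (\<Sum>\<alpha>\<in>supp_c N c. if i \<in> \<alpha> then (c \<alpha>)\<^sup>2 else 0)"
    by (auto intro!: sum_nonneg sum_mono)
  moreover have "(\<Sum>\<alpha>\<in>supp_c N c. if i \<in> \<alpha> then (c \<alpha>)\<^sup>2 else 0) = delta2_at N c i"
    unfolding delta2_at_def using assms(1) by (simp add: sum.inter_filter)
  ultimately show ?thesis by simp
qed

lemma cube_expectation_Psi_set:
  assumes "\<Union>(supp_c N c) \<subseteq> {1..m}"
  shows "cube_expectation p m (Psi_set N c) = p ^ N * cnorm2 N c"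
proof -
  have "cube_expectation p m (Psi_set N c)
      = (\<Sum>\<alpha>\<in>supp_c N c. (c \<alpha>)\<^sup>2 * cube_expectation p m (\<lambda>T. of_bool (\<alpha> \<subseteq> T)))"
    unfolding Psi_set_def by (simp add: cube_expectation_sum cube_expectation_cmult)
  also have "\<dots> = (\<Sum>\<alpha>\<in>supp_c N c. (c \<alpha>)\<^sup>2 * p ^ N)"
  proof (intro sum.cong refl)
    fix \<alpha> assume \<alpha>: "\<alpha> \<in> supp_c N c"
    then have "\<alpha> \<subseteq> {1..m}" using assms by blast
    moreover have "card \<alpha> = N" using \<alpha> by (simp add: supp_c_def multi_idx_def)
    ultimately show "(c \<alpha>)\<^sup>2 * cube_expectation p m (\<lambda>T. of_bool (\<alpha> \<subseteq> T)) = (c \<alpha>)\<^sup>2 * p ^ N"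
      by (simp add: cube_expectation_superset)
  qed
  finally show ?thesis by (simp add: cnorm2_def sum_distrib_left mult.commute)
qed

lemma finite_range_delta2_at:
  assumes "finite (supp_c N c)"
  shows "finite (range (delta2_at N c))"
proof -
  have "range (delta2_at N c) \<subseteq> (\<lambda>B. \<Sum>\<alpha>\<in>B. (c \<alpha>)\<^sup>2) ` Pow (supp_c N c)"
    unfolding delta2_at_def by auto
  then show ?thesis
    using assms by (meson finite_Pow_iff finite_imageI finite_subset)
qed

lemma delta2_at_le_delta2:
  assumes "finite (supp_c N c)"
  shows "delta2_at N c n \<le> delta2 N c"
  unfolding delta2_def delta2_at_def[symmetric] using finite_range_delta2_at[OF assms] by simp

lemma delta2_le_cnorm2:
  assumes "finite (supp_c N c)"
  shows "delta2 N c \<le> cnorm2 N c"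
proof -
  have "delta2_at N c n \<le> cnorm2 N c" for n
    unfolding delta2_at_def cnorm2_def using assms by (intro sum_mono2) auto
  then show ?thesis
    unfolding delta2_def delta2_at_def[symmetric] using finite_range_delta2_at[OF assms]
    by (simp add: Max_le_iff)
qed

lemma sum_delta2_at:
  assumes "finite (supp_c N c)" and "\<Union>(supp_c N c) \<subseteq> {1..m}"
  shows "(\<Sum>i\<in>{1..m}. delta2_at N c i) = real N * cnorm2 N c"
proof -
  have "(\<Sum>i\<in>{1..m}. delta2_at N c i)
      = (\<Sum>i\<in>{1..m}. \<Sum>\<alpha>\<in>supp_c N c. if i \<in> \<alpha> then (c \<alpha>)\<^sup>2 else 0)"
    unfolding delta2_at_def using assms(1) by (simp add: sum.inter_filter)
  also have "\<dots> = (\<Sum>\<alpha>\<in>supp_c N c. \<Sum>i\<in>{1..m}. if i \<in> \<alpha> then (c \<alpha>)\<^sup>2 else 0)"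
    by (rule sum.swap)
  also have "\<dots> = (\<Sum>\<alpha>\<in>supp_c N c. real N * (c \<alpha>)\<^sup>2)"
  proof (intro sum.cong refl)
    fix \<alpha> assume \<alpha>: "\<alpha> \<in> supp_c N c"
    then have "{i\<in>{1..m}. i \<in> \<alpha>} = \<alpha>" and "card \<alpha> = N"
      using assms(2) by (auto simp: supp_c_def multi_idx_def)
    then show "(\<Sum>i\<in>{1..m}. if i \<in> \<alpha> then (c \<alpha>)\<^sup>2 else 0) = real N * (c \<alpha>)\<^sup>2"
      by (simp flip: sum.inter_filter)
  qed
  finally show ?thesis by (simp add: cnorm2_def sum_distrib_left)
qed

lemma cube_expectation_Psi_set_le_negative:
  assumes "x < 0"
  shows "cube_expectation p m (\<lambda>T. of_bool (Psi_set N c T \<le> x)) = 0"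
proof -
  have "\<not> Psi_set N c T \<le> x" for T
    using assms Psi_set_nonneg[of N c T] by linarith
  then show ?thesis by (simp add: cube_expectation_def)
qed

lemma Psi_set_cube_lower_tail:
  assumes p: "0 \<le> p" "p \<le> 1" and N: "N \<ge> 1"
    and fin: "finite (supp_c N c)" and window: "\<Union>(supp_c N c) \<subseteq> {1..m}"
    and delta: "delta2 N c > 0" and x: "0 \<le> x" "x < (p / 2) ^ N * cnorm2 N c"
  shows "cube_expectation p m (\<lambda>T. of_bool (Psi_set N c T \<le> x))
           \<le> exp (- (x\<^sup>2 / (delta2 N c * cnorm2 N c)))"
proof -
  define C where "C = cnorm2 N c"
  define \<delta> where "\<delta> = delta2 N c"
  define t where "t = p ^ N * C - x"
  have C: "C > 0" using delta delta2_le_cnorm2[OF fin] by (simp add: C_def)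
  have "2 ^ N * x < p ^ N * C"
    using x(2) by (simp add: C_def power_divide field_simps)
  moreover have "real N * x \<le> (2 ^ N - 1) * x"
  proof -
    have "real (Suc N) \<le> real (2 ^ N)" using less_exp[of N] by (simp only: of_nat_le_iff Suc_le_eq)
    then have "real N + 1 \<le> 2 ^ N" by simp
    then show ?thesis using x(1) by (intro mult_right_mono) auto
  qed
  ultimately have t: "real N * x \<le> t" by (simp add: t_def algebra_simps)
  have "(\<Sum>i\<in>{1..m}. (delta2_at N c i)\<^sup>2) \<le> (\<Sum>i\<in>{1..m}. \<delta> * delta2_at N c i)"
    unfolding power2_eq_square \<delta>_def using fin
    by (intro sum_mono mult_right_mono delta2_at_le_delta2) (auto simp: delta2_at_def intro: sum_nonneg)
  also have "\<dots> = \<delta> * (real N * C)"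
    using sum_delta2_at[OF fin window] by (simp add: C_def flip: sum_distrib_left)
  finally have sum_sq: "(\<Sum>i\<in>{1..m}. (delta2_at N c i)\<^sup>2) \<le> \<delta> * (real N * C)" .
  have "\<delta> * (real N * C) > 0" and "t \<ge> 0"
    using N C delta t x(1) by (auto simp: \<delta>_def intro: order_trans[rotated])
  from McDiarmid_cube_lower_tail[OF p Psi_set_insert_diff_le[OF fin] sum_sq this]
  have "cube_expectation p m (\<lambda>T. of_bool (Psi_set N c T \<le> x))
      \<le> exp (- (2 * t\<^sup>2 / (\<delta> * (real N * C))))"
    using cube_expectation_Psi_set[OF window] by (simp add: C_def t_def)
  also have "\<dots> \<le> exp (- (x\<^sup>2 / (\<delta> * C)))"
  proof -
    have "1 * (real N * x\<^sup>2) \<le> real N * (real N * x\<^sup>2)"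
      using N by (intro mult_right_mono) auto
    also have "\<dots> = (real N * x)\<^sup>2" by (simp add: power2_eq_square algebra_simps)
    also have "\<dots> \<le> t\<^sup>2"
      using t x(1) by (intro power_mono) auto
    finally have "x\<^sup>2 * real N \<le> 2 * t\<^sup>2"
      by (smt (verit) mult.commute zero_le_power2)
    then show ?thesis
      using N C delta by (simp add: \<delta>_def field_simps)
  qed
  finally show ?thesis by (simp add: \<delta>_def C_def)
qed

lemma one_le_lemmaA1_prefactor:
  assumes "N \<ge> 1"
  shows "1 \<le> 2 * exp 3 / 9 * real N"
proof -
  have "9 \<le> 2 * exp (3::real)"
    using exp_lower_Taylor_quadratic[of 3] by simp
  then have "9 * 1 \<le> 2 * exp 3 * real N"
    using assms by (intro mult_mono) auto
  then show ?thesis by simp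
qed

theorem lemmaA1:
  fixes M :: "'a measure" and X :: "nat \<Rightarrow> 'a \<Rightarrow> real"
    and p x :: real and N :: nat and c :: "nat set \<Rightarrow> real"
  assumes "prob_space M"
    and "prob_space.indep_vars M (\<lambda>_. borel) X {1..}"
    and "\<And>n. n \<ge> 1 \<Longrightarrow> \<forall>\<omega>\<in>space M. X n \<omega> \<in> {0, 1}"
    and "\<And>n. n \<ge> 1 \<Longrightarrow> measure M {\<omega> \<in> space M. X n \<omega> = 1} = p"
    and "0 < p" and "p < 1"
    and "N \<ge> 1"
    and "finite (supp_c N c)"
    and "delta2 N c > 0"
    and "x < (p / 2) ^ N * cnorm2 N c"
  shows "measure M {\<omega> \<in> space M. Psi N c X \<omega> \<le> x}
           \<le> 2 * exp 3 / 9 * real N * exp (- (x\<^sup>2 / (delta2 N c * cnorm2 N c)))"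
proof -
  interpret prob_space M by fact
  obtain m where window: "\<Union>(supp_c N c) \<subseteq> {1..m}"
    using supp_c_subset_window[OF assms(8)] by blast
  have "Psi N c X \<omega> = Psi_set N c {i\<in>{1..m}. X i \<omega> = 1}" if "\<omega> \<in> space M" for \<omega>
    using assms(3) that by (intro Psi_eq_Psi_set[OF window]) auto
  then have "{\<omega> \<in> space M. Psi N c X \<omega> \<le> x}
      = {\<omega> \<in> space M. Psi_set N c {i\<in>{1..m}. X i \<omega> = 1} \<le> x}"
    by auto
  then have "measure M {\<omega> \<in> space M. Psi N c X \<omega> \<le> x}
      = cube_expectation p m (\<lambda>T. of_bool (Psi_set N c T \<le> x))"
    using prob_window_eq_cube_expectation[OF assms(2-4), of "\<lambda>T. Psi_set N c T \<le> x" m]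
    by simp
  also have "\<dots> \<le> exp (- (x\<^sup>2 / (delta2 N c * cnorm2 N c)))"
    using assms window Psi_set_cube_lower_tail[of p N c m x]
      cube_expectation_Psi_set_le_negative[of x p m N c]
    by (cases "x < 0") auto
  also have "\<dots> \<le> 2 * exp 3 / 9 * real N * exp (- (x\<^sup>2 / (delta2 N c * cnorm2 N c)))"
    using one_le_lemmaA1_prefactor[OF assms(7)] by (simp add: mult_le_cancel_right1)
  finally show ?thesis .
qed

end
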